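(* For every finite zero-set $\mathcal Z$ there exists a time $T_{\max}=T_{\max}(\mathcal Z)$ such that for every set $A\subseteq\mathbb Z_+^2$ (not necessarily finite), $\mathcal T^{T_{\max}+1}(A)=\mathcal T^{T_{\max}}(A)$.
   Context: $\mathbb Z_+=\{0,1,2,\dots\}$, $R_{a,b}=([0,a-1]\times[0,b-1])\cap\mathbb Z_+^2$; a zero-set is a set $\mathcal Z\subseteq\mathbb Z_+^2$ that is a union of such rectangles. For $A\subseteq\mathbb Z_+^2$ and $x\in\mathbb Z_+^2$, $\mathrm{row}(x,A)$ (resp. $\mathrm{col}(x,A)$) is the (possibly infinite) number of points of $A$ on the horizontal (resp. vertical) line through $x$, and $\mathcal T(A)=A\cup\{x\notin A:(\mathrm{row}(x,A),\mathrm{col}(x,A))\notin\mathcal Z\}$ (a pair with an infinite coordinate is never in $\mathcal Z$). *)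

theory Defs
  imports Main "HOL-Library.Extended_Nat"
begin

type_synonym point = "nat \<times> nat"

definition rect :: "nat \<Rightarrow> nat \<Rightarrow> point set" where
  "rect a b = {(i, j). i < a \<and> j < b}"

definition zero_set :: "point set \<Rightarrow> bool" where
  "zero_set Z \<longleftrightarrow> (\<exists>S. Z = (\<Union>(a, b)\<in>S. rect a b))"

definition ecount :: "'a set \<Rightarrow> enat" where
  "ecount S = (if finite S then enat (card S) else \<infinity>)"

definition row :: "point \<Rightarrow> point set \<Rightarrow> enat" where
  "row x A = ecount {y \<in> A. snd y = snd x}"

definition col :: "point \<Rightarrow> point set \<Rightarrow> enat" where
  "col x A = ecount {y \<in> A. fst y = fst x}"

text \<open>A pair with an infinite coordinate is never in Z.\<close>
definition in_zero :: "point set \<Rightarrow> enat \<Rightarrow> enat \<Rightarrow> bool" where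
  "in_zero Z r c \<longleftrightarrow> (\<exists>a b. r = enat a \<and> c = enat b \<and> (a, b) \<in> Z)"

definition T_step :: "point set \<Rightarrow> point set \<Rightarrow> point set" where
  "T_step Z A = A \<union> {x. x \<notin> A \<and> \<not> in_zero Z (row x A) (col x A)}"

end

theory Submission
  imports Defs
begin

text \<open>
  Let every element of the finite, downward closed set \<open>Z\<close> have both coordinates below \<open>m\<close>.
  A line with at least \<open>m\<close> points is saturated: one step fills it completely.
  If there are \<open>m\<close> saturated rows (or columns), one step saturates every column (row), and
  the next step fills the whole quadrant. Otherwise a step that changes no saturated or full line
  can only add points in columns that are free with respect to a row of maximal unsaturated count,
  and in rows free with respect to a column of maximal unsaturated count; there are fewer than
  \<open>m\<close> of each. So the lexicographically ordered triple (number of saturated and full lines,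
  number of free lines, number of points in the free rectangle) strictly increases at every
  non-stationary step, and it takes boundedly many values depending only on \<open>m\<close>.
\<close>

lemma funpow_fixpoint_of_bounded_potential:
  fixes f :: "'a \<Rightarrow> 'a" and \<phi> :: "'a \<Rightarrow> nat"
  assumes increase: "\<And>x. f x \<noteq> x \<Longrightarrow> \<phi> x < \<phi> (f x)" and bounded: "\<And>x. \<phi> x \<le> N"
  shows "(f ^^ Suc N) x = (f ^^ N) x"
proof -
  obtain t where t: "t \<le> N" "f ((f ^^ t) x) = (f ^^ t) x"
  proof (rule ccontr)
    assume "\<not> thesis"
    with that have moving: "t \<le> N \<Longrightarrow> f ((f ^^ t) x) \<noteq> (f ^^ t) x" for t by blast
    have "t \<le> Suc N \<Longrightarrow> t \<le> \<phi> ((f ^^ t) x)" for t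
    proof (induction t)
      case (Suc t)
      with increase[OF moving] show ?case by fastforce
    qed simp
    from this[of "Suc N"] bounded show False by (metis not_less_eq_eq order_refl order_trans)
  qed
  have "(f ^^ (k + t)) x = (f ^^ t) x" for k
    using t(2) by (induction k) auto
  from this[of "Suc N - t"] this[of "N - t"] t(1) show ?thesis by (simp add: Suc_diff_le)
qed

lemma lex_encode_less:
  fixes a b a' b' K :: nat
  assumes "b < K" and "a < a' \<or> a = a' \<and> b < b'"
  shows "a * K + b < a' * K + b'"
proof (cases "a < a'")
  case True
  then have "a * K + K \<le> a' * K" using mult_le_mono1[of "Suc a" a' K] by simp
  with assms(1) show ?thesis by linarith
qed (use assms in auto)

lemma lex_encode_bound:
  fixes a b N K :: nat
  assumes "a < N" and "b < K"
  shows "a * K + b < N * K"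
  using lex_encode_less[OF assms(2), of a N 0] assms(1) by simp

lemma ecount_mono: "S \<subseteq> S' \<Longrightarrow> ecount S \<le> ecount S'"
  unfolding ecount_def by (auto intro: card_mono dest: finite_subset)

lemma ecount_image: "inj_on f S \<Longrightarrow> ecount (f ` S) = ecount S"
  unfolding ecount_def by (simp add: card_image finite_image_iff)

lemma ecount_less_enat_iff: "ecount S < enat n \<longleftrightarrow> finite S \<and> card S < n"
  unfolding ecount_def by auto

lemma ecount_infinite: "infinite S \<Longrightarrow> ecount S = \<infinity>"
  unfolding ecount_def by simp

definition row_count :: "point set \<Rightarrow> nat \<Rightarrow> enat" where
  "row_count A j = ecount {y \<in> A. snd y = j}"

definition col_count :: "point set \<Rightarrow> nat \<Rightarrow> enat" where
  "col_count A i = ecount {y \<in> A. fst y = i}"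

definition full_rows :: "point set \<Rightarrow> nat set" where
  "full_rows A = {j. \<forall>i. (i, j) \<in> A}"

definition full_cols :: "point set \<Rightarrow> nat set" where
  "full_cols A = {i. \<forall>j. (i, j) \<in> A}"

lemma T_step_iff: "x \<in> T_step Z A \<longleftrightarrow> x \<in> A \<or> \<not> in_zero Z (row_count A (snd x)) (col_count A (fst x))"
  unfolding T_step_def row_def col_def row_count_def col_count_def by auto

lemma subset_T_step: "A \<subseteq> T_step Z A"
  unfolding T_step_def by auto

lemma row_count_mono: "A \<subseteq> A' \<Longrightarrow> row_count A j \<le> row_count A' j"
  unfolding row_count_def by (rule ecount_mono) auto

lemma col_count_mono: "A \<subseteq> A' \<Longrightarrow> col_count A i \<le> col_count A' i"
  unfolding col_count_def by (rule ecount_mono) auto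

lemma ecount_le_row_count:
  assumes "(\<lambda>i. (i, j)) ` W \<subseteq> A"
  shows "ecount W \<le> row_count A j"
proof -
  have "ecount ((\<lambda>i. (i, j)) ` W) \<le> ecount {y \<in> A. snd y = j}"
    using assms by (intro ecount_mono) auto
  then show ?thesis by (simp add: ecount_image inj_on_def row_count_def)
qed

lemma ecount_le_col_count:
  assumes "(\<lambda>j. (i, j)) ` W \<subseteq> A"
  shows "ecount W \<le> col_count A i"
proof -
  have "ecount ((\<lambda>j. (i, j)) ` W) \<le> ecount {y \<in> A. fst y = i}"
    using assms by (intro ecount_mono) auto
  then show ?thesis by (simp add: ecount_image inj_on_def col_count_def)
qed

lemma full_row_count: "j \<in> full_rows A \<Longrightarrow> row_count A j = \<infinity>"
  using ecount_le_row_count[of j UNIV A] by (simp add: full_rows_def ecount_infinite image_subset_iff)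

lemma full_col_count: "i \<in> full_cols A \<Longrightarrow> col_count A i = \<infinity>"
  using ecount_le_col_count[of i UNIV A] by (simp add: full_cols_def ecount_infinite image_subset_iff)

lemma zero_set_downward_closed:
  assumes "zero_set Z" "(a, b) \<in> Z" "a' \<le> a" "b' \<le> b"
  shows "(a', b') \<in> Z"
  using assms unfolding zero_set_def rect_def by fastforce

lemma finite_points_bounded:
  fixes Z :: "point set"
  assumes "finite Z"
  obtains m where "\<And>a b. (a, b) \<in> Z \<Longrightarrow> a < m \<and> b < m"
proof -
  have "finite (fst ` Z \<union> snd ` Z)" using assms by simp
  then obtain m where "\<forall>x \<in> fst ` Z \<union> snd ` Z. x < m" by (auto simp: finite_nat_set_iff_bounded)
  then show thesis by (intro that[of m]) force
qed

locale bounded_downset =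
  fixes Z :: "point set" and m :: nat
  assumes down_closed: "(a, b) \<in> Z \<Longrightarrow> a' \<le> a \<Longrightarrow> b' \<le> b \<Longrightarrow> (a', b') \<in> Z"
    and bounded: "(a, b) \<in> Z \<Longrightarrow> a < m \<and> b < m"
begin

lemma not_in_zero_if_ge: "enat m \<le> r \<or> enat m \<le> c \<Longrightarrow> \<not> in_zero Z r c"
  unfolding in_zero_def using bounded by fastforce

lemma in_zero_antimono:
  assumes "in_zero Z r c" "r' \<le> r" "c' \<le> c"
  shows "in_zero Z r' c'"
proof -
  obtain a b where ab: "r = enat a" "c = enat b" "(a, b) \<in> Z"
    using assms(1) unfolding in_zero_def by auto
  obtain a' b' where "r' = enat a'" "a' \<le> a" "c' = enat b'" "b' \<le> b"
    using assms(2,3) ab by (cases r'; cases c') auto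
  with ab show ?thesis unfolding in_zero_def using down_closed by blast
qed

definition sat_rows :: "point set \<Rightarrow> nat set" where
  "sat_rows A = {j. enat m \<le> row_count A j}"

definition sat_cols :: "point set \<Rightarrow> nat set" where
  "sat_cols A = {i. enat m \<le> col_count A i}"

lemma full_rows_subset_sat_rows: "full_rows A \<subseteq> sat_rows A"
  unfolding sat_rows_def by (auto simp: full_row_count)

lemma full_cols_subset_sat_cols: "full_cols A \<subseteq> sat_cols A"
  unfolding sat_cols_def by (auto simp: full_col_count)

lemma sat_rows_mono: "A \<subseteq> A' \<Longrightarrow> sat_rows A \<subseteq> sat_rows A'"
  unfolding sat_rows_def using row_count_mono order_trans by blast

lemma sat_cols_mono: "A \<subseteq> A' \<Longrightarrow> sat_cols A \<subseteq> sat_cols A'"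
  unfolding sat_cols_def using col_count_mono order_trans by blast

lemma sat_row_filled: "j \<in> sat_rows A \<Longrightarrow> j \<in> full_rows (T_step Z A)"
  unfolding sat_rows_def full_rows_def by (simp add: T_step_iff not_in_zero_if_ge)

lemma sat_col_filled: "i \<in> sat_cols A \<Longrightarrow> i \<in> full_cols (T_step Z A)"
  unfolding sat_cols_def full_cols_def by (simp add: T_step_iff not_in_zero_if_ge)

definition saturated :: "point set \<Rightarrow> bool" where
  "saturated A \<longleftrightarrow> sat_rows A = UNIV \<or> sat_cols A = UNIV"

lemma T_step_saturated: "saturated A \<Longrightarrow> T_step Z A = UNIV"
  unfolding saturated_def sat_rows_def sat_cols_def using not_in_zero_if_ge by (fastforce simp: T_step_iff)

definition sparse :: "point set \<Rightarrow> bool" where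
  "sparse A \<longleftrightarrow> ecount (sat_rows A) < enat m \<and> ecount (sat_cols A) < enat m"

lemma saturated_T_step_if_not_sparse:
  assumes "\<not> sparse A"
  shows "saturated (T_step Z A)"
proof -
  consider "\<not> ecount (sat_rows A) < enat m" | "\<not> ecount (sat_cols A) < enat m"
    using assms unfolding sparse_def by blast
  then show ?thesis
  proof cases
    case 1
    then have "enat m \<le> col_count (T_step Z A) i" for i
      using ecount_le_col_count[of i "sat_rows A" "T_step Z A"] sat_row_filled
      by (force simp: full_rows_def)
    then show ?thesis unfolding saturated_def sat_cols_def by auto
  next
    case 2
    then have "enat m \<le> row_count (T_step Z A) j" for j
      using ecount_le_row_count[of j "sat_cols A" "T_step Z A"] sat_col_filled
      by (force simp: full_cols_def)
    then show ?thesis unfolding saturated_def sat_rows_def by auto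
  qed
qed

definition line_weight :: "point set \<Rightarrow> nat" where
  "line_weight A = card (sat_rows A) + card (full_rows A) + card (sat_cols A) + card (full_cols A)"

definition same_lines :: "point set \<Rightarrow> point set \<Rightarrow> bool" where
  "same_lines A A' \<longleftrightarrow> sat_rows A' = sat_rows A \<and> sat_cols A' = sat_cols A
     \<and> full_rows A' = full_rows A \<and> full_cols A' = full_cols A"

lemma line_weight_less:
  assumes "sparse A"
  shows "line_weight A < 4 * m"
proof -
  have fin: "finite (sat_rows A)" "finite (sat_cols A)"
    and card: "card (sat_rows A) < m" "card (sat_cols A) < m"
    using assms unfolding sparse_def ecount_less_enat_iff by auto
  have "card (full_rows A) \<le> card (sat_rows A)" "card (full_cols A) \<le> card (sat_cols A)"
    using card_mono[OF fin(1) full_rows_subset_sat_rows] card_mono[OF fin(2) full_cols_subset_sat_cols] .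
  with card show ?thesis unfolding line_weight_def by linarith
qed

lemma same_lines_or_line_weight_increase:
  assumes "sparse A'" "A \<subseteq> A'"
  shows "same_lines A A' \<or> line_weight A < line_weight A'"
proof (rule disjCI)
  have fin: "finite (sat_rows A')" "finite (sat_cols A')" "finite (full_rows A')" "finite (full_cols A')"
    using assms(1) finite_subset[OF full_rows_subset_sat_rows] finite_subset[OF full_cols_subset_sat_cols]
    unfolding sparse_def ecount_less_enat_iff by auto
  have sub: "sat_rows A \<subseteq> sat_rows A'" "sat_cols A \<subseteq> sat_cols A'"
    "full_rows A \<subseteq> full_rows A'" "full_cols A \<subseteq> full_cols A'"
    using sat_rows_mono[OF assms(2)] sat_cols_mono[OF assms(2)] assms(2)
    unfolding full_rows_def full_cols_def by auto
  have "card (sat_rows A) \<le> card (sat_rows A')" "card (sat_cols A) \<le> card (sat_cols A')"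
    "card (full_rows A) \<le> card (full_rows A')" "card (full_cols A) \<le> card (full_cols A')"
    using card_mono[OF fin(1) sub(1)] card_mono[OF fin(2) sub(2)]
      card_mono[OF fin(3) sub(3)] card_mono[OF fin(4) sub(4)] .
  moreover assume "\<not> line_weight A < line_weight A'"
  ultimately have "card (sat_rows A) = card (sat_rows A')" "card (sat_cols A) = card (sat_cols A')"
    "card (full_rows A) = card (full_rows A')" "card (full_cols A) = card (full_cols A')"
    unfolding line_weight_def by linarith+
  then show "same_lines A A'"
    unfolding same_lines_def using card_subset_eq[OF fin(1) sub(1)] card_subset_eq[OF fin(2) sub(2)]
      card_subset_eq[OF fin(3) sub(3)] card_subset_eq[OF fin(4) sub(4)] by simp
qed

definition max_row :: "point set \<Rightarrow> enat" where
  "max_row A = Sup (row_count A ` (- sat_rows A))"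

definition max_col :: "point set \<Rightarrow> enat" where
  "max_col A = Sup (col_count A ` (- sat_cols A))"

lemma row_count_le_max_row: "j \<notin> sat_rows A \<Longrightarrow> row_count A j \<le> max_row A"
  unfolding max_row_def by (metis ComplI SUP_upper)

lemma col_count_le_max_col: "i \<notin> sat_cols A \<Longrightarrow> col_count A i \<le> max_col A"
  unfolding max_col_def by (metis ComplI SUP_upper)

lemma Sup_enat_in:
  fixes S :: "enat set"
  assumes "S \<noteq> {}" and "\<And>x. x \<in> S \<Longrightarrow> x \<le> enat n"
  shows "Sup S \<in> S"
proof -
  have "finite S" using assms(2) by (rule finite_enat_bounded)
  with assms(1) show ?thesis unfolding Sup_enat_def by (simp add: Max_in)
qed

lemma max_row_attained:
  assumes "j \<notin> sat_rows A"
  obtains j0 where "j0 \<notin> sat_rows A" "row_count A j0 = max_row A"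
proof -
  have "max_row A \<in> row_count A ` (- sat_rows A)"
    unfolding max_row_def
  proof (rule Sup_enat_in[where n = m])
    show "row_count A ` (- sat_rows A) \<noteq> {}" using assms by blast
  qed (auto simp: sat_rows_def not_le less_imp_le)
  then show thesis using that by (metis ComplD imageE)
qed

lemma max_col_attained:
  assumes "i \<notin> sat_cols A"
  obtains i0 where "i0 \<notin> sat_cols A" "col_count A i0 = max_col A"
proof -
  have "max_col A \<in> col_count A ` (- sat_cols A)"
    unfolding max_col_def
  proof (rule Sup_enat_in[where n = m])
    show "col_count A ` (- sat_cols A) \<noteq> {}" using assms by blast
  qed (auto simp: sat_cols_def not_le less_imp_le)
  then show thesis using that by (metis ComplD imageE)
qed

lemma max_row_mono: "A \<subseteq> A' \<Longrightarrow> sat_rows A' = sat_rows A \<Longrightarrow> max_row A \<le> max_row A'"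
  unfolding max_row_def by (metis SUP_mono row_count_mono)

lemma max_col_mono: "A \<subseteq> A' \<Longrightarrow> sat_cols A' = sat_cols A \<Longrightarrow> max_col A \<le> max_col A'"
  unfolding max_col_def by (metis SUP_mono col_count_mono)

definition free_cols :: "point set \<Rightarrow> nat set" where
  "free_cols A = {i. i \<notin> sat_cols A \<and> \<not> in_zero Z (max_row A) (col_count A i)}"

definition free_rows :: "point set \<Rightarrow> nat set" where
  "free_rows A = {j. j \<notin> sat_rows A \<and> \<not> in_zero Z (row_count A j) (max_col A)}"

lemma new_point_free:
  assumes "(i, j) \<in> T_step Z A" "(i, j) \<notin> A" "j \<notin> sat_rows A" "i \<notin> sat_cols A"
  shows "i \<in> free_cols A" "j \<in> free_rows A"
proof -
  have "\<not> in_zero Z (row_count A j) (col_count A i)"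
    using assms(1,2) by (simp add: T_step_iff)
  then show "i \<in> free_cols A" "j \<in> free_rows A"
    unfolding free_cols_def free_rows_def
    using assms(3,4) in_zero_antimono row_count_le_max_row col_count_le_max_col by blast+
qed

lemma free_cols_in_max_row:
  "row_count A j0 = max_row A \<Longrightarrow> (\<lambda>i. (i, j0)) ` free_cols A \<subseteq> T_step Z A"
  unfolding free_cols_def by (auto simp: T_step_iff)

lemma free_rows_in_max_col:
  "col_count A i0 = max_col A \<Longrightarrow> (\<lambda>j. (i0, j)) ` free_rows A \<subseteq> T_step Z A"
  unfolding free_rows_def by (auto simp: T_step_iff)

lemma ecount_free_cols_less:
  assumes "sat_rows (T_step Z A) = sat_rows A" "j \<notin> sat_rows A"
  shows "ecount (free_cols A) < enat m"
proof -
  obtain j0 where j0: "j0 \<notin> sat_rows A" "row_count A j0 = max_row A"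
    using max_row_attained[OF assms(2)] .
  then have "ecount (free_cols A) \<le> row_count (T_step Z A) j0"
    by (intro ecount_le_row_count free_cols_in_max_row)
  also have "\<dots> < enat m"
    using j0(1) assms(1) unfolding sat_rows_def by (metis mem_Collect_eq not_le)
  finally show ?thesis .
qed

lemma ecount_free_rows_less:
  assumes "sat_cols (T_step Z A) = sat_cols A" "i \<notin> sat_cols A"
  shows "ecount (free_rows A) < enat m"
proof -
  obtain i0 where i0: "i0 \<notin> sat_cols A" "col_count A i0 = max_col A"
    using max_col_attained[OF assms(2)] .
  then have "ecount (free_rows A) \<le> col_count (T_step Z A) i0"
    by (intro ecount_le_col_count free_rows_in_max_col)
  also have "\<dots> < enat m"
    using i0(1) assms(1) unfolding sat_cols_def by (metis mem_Collect_eq not_le)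
  finally show ?thesis .
qed

lemma free_cols_mono:
  assumes "A \<subseteq> A'" "sat_rows A' = sat_rows A" "sat_cols A' = sat_cols A"
  shows "free_cols A \<subseteq> free_cols A'"
  unfolding free_cols_def
  using assms in_zero_antimono[OF _ max_row_mono[OF assms(1,2)] col_count_mono[OF assms(1)]] by auto

lemma free_rows_mono:
  assumes "A \<subseteq> A'" "sat_rows A' = sat_rows A" "sat_cols A' = sat_cols A"
  shows "free_rows A \<subseteq> free_rows A'"
  unfolding free_rows_def
  using assms in_zero_antimono[OF _ row_count_mono[OF assms(1)] max_col_mono[OF assms(1,3)]] by auto

definition free_small :: "point set \<Rightarrow> bool" where
  "free_small A \<longleftrightarrow> ecount (free_rows A) < enat m \<and> ecount (free_cols A) < enat m"

definition free_weight :: "point set \<Rightarrow> nat" where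
  "free_weight A = (if free_small A then card (free_rows A) + card (free_cols A) else 2 * m)"

definition free_fill :: "point set \<Rightarrow> nat" where
  "free_fill A = (if free_small A then card (A \<inter> free_cols A \<times> free_rows A) else 0)"

lemma free_weight_le: "free_weight A \<le> 2 * m"
  unfolding free_weight_def free_small_def ecount_less_enat_iff by auto

lemma free_fill_le: "free_fill A \<le> m * m"
proof (cases "free_small A")
  case True
  then have fin: "finite (free_cols A \<times> free_rows A)"
    and card: "card (free_cols A) \<le> m" "card (free_rows A) \<le> m"
    unfolding free_small_def ecount_less_enat_iff by auto
  have "card (A \<inter> free_cols A \<times> free_rows A) \<le> card (free_cols A \<times> free_rows A)"
    using fin by (intro card_mono) auto
  also have "\<dots> \<le> m * m"
    using card by (simp add: card_cartesian_product mult_le_mono)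
  finally show ?thesis using True unfolding free_fill_def by simp
qed (simp add: free_fill_def)

lemma free_progress_if_new_point:
  assumes "A \<subseteq> A'" "free_small A"
    and "free_rows A \<subseteq> free_rows A'" "free_cols A \<subseteq> free_cols A'"
    and "x \<in> A' - A" "x \<in> free_cols A \<times> free_rows A"
  shows "free_weight A < free_weight A' \<or> free_weight A = free_weight A' \<and> free_fill A < free_fill A'"
proof (cases "free_small A'")
  case small': True
  show ?thesis
  proof (cases "free_rows A' = free_rows A \<and> free_cols A' = free_cols A")
    case True
    have "finite (free_cols A \<times> free_rows A)"
      using assms(2) unfolding free_small_def ecount_less_enat_iff by auto
    moreover have "A \<inter> free_cols A \<times> free_rows A \<subset> A' \<inter> free_cols A \<times> free_rows A"
      using assms(1,5,6) by auto
    ultimately have "free_fill A < free_fill A'"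
      using True assms(2) small' unfolding free_fill_def by (simp add: psubset_card_mono)
    with True show ?thesis using assms(2) small' unfolding free_weight_def by simp
  next
    case False
    have fin: "finite (free_rows A')" "finite (free_cols A')"
      using small' unfolding free_small_def ecount_less_enat_iff by auto
    have "card (free_rows A) < card (free_rows A') \<or> card (free_cols A) < card (free_cols A')"
      using False assms(3,4) fin psubset_card_mono by blast
    moreover have "card (free_rows A) \<le> card (free_rows A')" "card (free_cols A) \<le> card (free_cols A')"
      using assms(3,4) fin card_mono by blast+
    ultimately show ?thesis using assms(2) small' unfolding free_weight_def by auto
  qed
next
  case False
  then show ?thesis
    using assms(2) unfolding free_weight_def free_small_def ecount_less_enat_iff by auto
qed

lemma free_progress:
  assumes "same_lines A (T_step Z A)" "T_step Z A \<noteq> A"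
  shows "free_weight A < free_weight (T_step Z A)
    \<or> free_weight A = free_weight (T_step Z A) \<and> free_fill A < free_fill (T_step Z A)"
proof -
  let ?A' = "T_step Z A"
  have same: "sat_rows ?A' = sat_rows A" "sat_cols ?A' = sat_cols A"
    "full_rows ?A' = full_rows A" "full_cols ?A' = full_cols A"
    using assms(1) unfolding same_lines_def by simp_all
  obtain i j where new: "(i, j) \<in> ?A'" "(i, j) \<notin> A"
    using assms(2) subset_T_step by fastforce
  have "j \<notin> full_rows A" "i \<notin> full_cols A"
    using new(2) unfolding full_rows_def full_cols_def by auto
  then have unsat: "j \<notin> sat_rows A" "i \<notin> sat_cols A"
    using sat_row_filled[of j A] sat_col_filled[of i A] same(3,4) by auto
  have "free_small A"
    unfolding free_small_def
    using ecount_free_rows_less[OF same(2) unsat(2)] ecount_free_cols_less[OF same(1) unsat(1)] ..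
  moreover have "(i, j) \<in> free_cols A \<times> free_rows A"
    using new_point_free[OF new unsat] by simp
  moreover have "free_rows A \<subseteq> free_rows ?A'" "free_cols A \<subseteq> free_cols ?A'"
    using free_rows_mono[OF subset_T_step same(1,2)] free_cols_mono[OF subset_T_step same(1,2)] .
  ultimately show ?thesis
    using new by (intro free_progress_if_new_point[OF subset_T_step]) auto
qed

definition potential_bound :: nat where
  "potential_bound = 4 * m * (2 * m + 1) * (m * m + 1)"

definition sparse_potential :: "point set \<Rightarrow> nat" where
  "sparse_potential A = (line_weight A * (2 * m + 1) + free_weight A) * (m * m + 1) + free_fill A"

lemma sparse_potential_less:
  assumes "sparse A"
  shows "sparse_potential A < potential_bound"
proof -
  have "line_weight A * (2 * m + 1) + free_weight A < 4 * m * (2 * m + 1)"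
    using line_weight_less[OF assms] free_weight_le[of A] by (intro lex_encode_bound) auto
  then show ?thesis
    unfolding sparse_potential_def potential_bound_def
    by (rule lex_encode_bound) (use free_fill_le[of A] in simp)
qed

lemma sparse_potential_increase:
  assumes "sparse (T_step Z A)" "T_step Z A \<noteq> A"
  shows "sparse_potential A < sparse_potential (T_step Z A)"
proof -
  have "line_weight A * (2 * m + 1) + free_weight A < line_weight (T_step Z A) * (2 * m + 1) + free_weight (T_step Z A)
    \<or> line_weight A * (2 * m + 1) + free_weight A = line_weight (T_step Z A) * (2 * m + 1) + free_weight (T_step Z A)
      \<and> free_fill A < free_fill (T_step Z A)"
    using same_lines_or_line_weight_increase[OF assms(1) subset_T_step]
  proof
    assume "same_lines A (T_step Z A)"
    then have "line_weight (T_step Z A) = line_weight A"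
      unfolding same_lines_def line_weight_def by simp
    with free_progress[OF \<open>same_lines A (T_step Z A)\<close> assms(2)] show ?thesis by auto
  next
    assume "line_weight A < line_weight (T_step Z A)"
    then show ?thesis using free_weight_le[of A] by (intro disjI1 lex_encode_less) auto
  qed
  then show ?thesis
    unfolding sparse_potential_def using free_fill_le[of A] by (intro lex_encode_less) auto
qed

definition potential :: "point set \<Rightarrow> nat" where
  "potential A = (if A = UNIV then potential_bound + 2
     else if saturated A then potential_bound + 1
     else if sparse A then sparse_potential A
     else potential_bound)"

lemma potential_le: "potential A \<le> potential_bound + 2"
  unfolding potential_def using sparse_potential_less[of A] by auto

lemma potential_increase:
  assumes "T_step Z A \<noteq> A"
  shows "potential A < potential (T_step Z A)"
proof -
  have "A \<noteq> UNIV" using assms subset_T_step[of A Z] by auto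
  consider "saturated A" | "\<not> saturated A" "\<not> sparse A" | "\<not> saturated A" "sparse A"
    by blast
  then show ?thesis
  proof cases
    case 1
    then show ?thesis using \<open>A \<noteq> UNIV\<close> T_step_saturated unfolding potential_def by simp
  next
    case 2
    then show ?thesis
      using \<open>A \<noteq> UNIV\<close> saturated_T_step_if_not_sparse unfolding potential_def by simp
  next
    case 3
    then have "potential A = sparse_potential A" using \<open>A \<noteq> UNIV\<close> unfolding potential_def by simp
    then show ?thesis
      using sparse_potential_less[OF 3(2)] sparse_potential_increase[OF _ assms]
      unfolding potential_def[of "T_step Z A"] by auto
  qed
qed

theorem funpow_T_step_stable:
  "(T_step Z ^^ Suc (potential_bound + 2)) A = (T_step Z ^^ (potential_bound + 2)) A"
  using potential_increase potential_le by (rule funpow_fixpoint_of_bounded_potential)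

end

theorem mainTheorem7:
  fixes Z :: "point set"
  assumes "zero_set Z" and "finite Z"
  shows "\<exists>Tmax::nat. \<forall>A :: point set.
           (T_step Z ^^ (Tmax + 1)) A = (T_step Z ^^ Tmax) A"
proof -
  obtain m where "\<And>a b. (a, b) \<in> Z \<Longrightarrow> a < m \<and> b < m"
    using finite_points_bounded[OF assms(2)] by blast
  then interpret bounded_downset Z m
    using zero_set_downward_closed[OF assms(1)] by unfold_locales blast+
  show ?thesis using funpow_T_step_stable by (metis Suc_eq_plus1)
qed

end
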